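(* Let $G$ be a nilpotent $p$-group ($p$ prime) whose first Ulm factor $G/G_0$ has bounded period. Then $G_0$ is divisible.
   Context: For a nilpotent $p$-group $G$, the height of $g\in G$ is the greatest $n$ with $g=h^{p^n}$ for some $h\in G$; if no greatest such $n$ exists, $g$ has infinite height. $G_0$ is the (normal) subgroup of elements of infinite height, and $G/G_0$ is the first Ulm factor. Bounded period means there is $n\ge1$ with $x^n=1$ for all elements $x$. Divisible means every element has an $n$-th root in the group for every $n\ge1$. *)

theory Defs
  imports "HOL-Algebra.Algebra"
begin

definition lcs_step :: "('a, 'b) monoid_scheme \<Rightarrow> 'a set \<Rightarrow> 'a set" where
  "lcs_step G H = generate G
     {x \<otimes>\<^bsub>G\<^esub> y \<otimes>\<^bsub>G\<^esub> inv\<^bsub>G\<^esub> x \<otimes>\<^bsub>G\<^esub> inv\<^bsub>G\<^esub> y | x y. x \<in> H \<and> y \<in> carrier G}"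

definition nilpotent_group :: "('a, 'b) monoid_scheme \<Rightarrow> bool" where
  "nilpotent_group G \<longleftrightarrow> group G \<and> (\<exists>n. (lcs_step G ^^ n) (carrier G) = {\<one>\<^bsub>G\<^esub>})"

definition p_group :: "('a, 'b) monoid_scheme \<Rightarrow> nat \<Rightarrow> bool" where
  "p_group G p \<longleftrightarrow> group G \<and> (\<forall>g\<in>carrier G. \<exists>k::nat. g [^]\<^bsub>G\<^esub> (p ^ k) = \<one>\<^bsub>G\<^esub>)"

definition has_root_pow :: "('a, 'b) monoid_scheme \<Rightarrow> nat \<Rightarrow> 'a \<Rightarrow> nat \<Rightarrow> bool" where
  "has_root_pow G p g n \<longleftrightarrow> (\<exists>h\<in>carrier G. g = h [^]\<^bsub>G\<^esub> (p ^ n))"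

definition infinite_height :: "('a, 'b) monoid_scheme \<Rightarrow> nat \<Rightarrow> 'a \<Rightarrow> bool" where
  "infinite_height G p g \<longleftrightarrow>
     \<not> (\<exists>n. has_root_pow G p g n \<and> (\<forall>m. has_root_pow G p g m \<longrightarrow> m \<le> n))"

definition G0 :: "('a, 'b) monoid_scheme \<Rightarrow> nat \<Rightarrow> 'a set" where
  "G0 G p = {g \<in> carrier G. infinite_height G p g}"

definition bounded_period :: "('c, 'd) monoid_scheme \<Rightarrow> bool" where
  "bounded_period H \<longleftrightarrow> (\<exists>n::nat. n \<ge> 1 \<and> (\<forall>x\<in>carrier H. x [^]\<^bsub>H\<^esub> n = \<one>\<^bsub>H\<^esub>))"

definition divisible_group :: "('c, 'd) monoid_scheme \<Rightarrow> bool" where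
  "divisible_group H \<longleftrightarrow>
     (\<forall>x\<in>carrier H. \<forall>n::nat. n \<ge> 1 \<longrightarrow> (\<exists>y\<in>carrier H. y [^]\<^bsub>H\<^esub> n = x))"

end

theory Submission
  imports Defs
begin

(* Choose k \<ge> 1 with h^k \<in> G0 for all h (bounded period of G/G0). Given x \<in> G0 and n \<ge> 1,
   write k n = p^f m with p not dividing m and pick h with h^(p^f) = x. Since h has p-power
   order, m is invertible modulo that order: h^(m m') = h. Then y = (h^k)^m' lies in G0,
   because powers of elements of infinite height have infinite height, and
   y^n = (h^(m m'))^(p^f) = x. *)

lemma (in group) nat_pow_coprime_exponent_inverse:
  assumes "x \<in> carrier G" "x [^] (q::nat) = \<one>" "coprime m q"
  obtains m' where "x [^] (m * m') = x"
proof (cases "m = 0")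
  case True
  then have "x = \<one>"
    using assms by (simp add: coprime_0_left_iff)
  then show thesis using that by simp
next
  case False
  then obtain m' l where "m * m' = q * l + 1"
    using bezout_nat[of m q] assms(3) by auto
  then have "x [^] (m * m') = (x [^] q) [^] l \<otimes> x"
    using assms(1) by (simp add: nat_pow_mult nat_pow_pow)
  then show thesis using that assms(1,2) by simp
qed

lemma (in group) has_root_pow_le:
  assumes "has_root_pow G p g m" "n \<le> m"
  shows "has_root_pow G p g n"
proof -
  obtain h where h: "h \<in> carrier G" "g = h [^] (p ^ m)"
    using assms(1) unfolding has_root_pow_def by blast
  have "p ^ m = p ^ (m - n) * p ^ n"
    using assms(2) by (simp flip: power_add)
  then have "g = (h [^] (p ^ (m - n))) [^] (p ^ n)"
    using h by (simp add: nat_pow_pow)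
  then show ?thesis unfolding has_root_pow_def using h by blast
qed

lemma (in group) infinite_height_iff:
  assumes "g \<in> carrier G"
  shows "infinite_height G p g \<longleftrightarrow> (\<forall>n. has_root_pow G p g n)"
proof
  assume height: "infinite_height G p g"
  show "\<forall>n. has_root_pow G p g n"
  proof (rule ccontr)
    assume "\<not> (\<forall>n. has_root_pow G p g n)"
    then obtain n where "\<not> has_root_pow G p g n" by blast
    then have bounded: "m < n" if "has_root_pow G p g m" for m
      using has_root_pow_le[OF that] by (meson not_le_imp_less)
    let ?S = "{m. has_root_pow G p g m}"
    have "finite ?S"
      using bounded by (meson bounded_nat_set_is_finite mem_Collect_eq)
    moreover have "0 \<in> ?S"
      using assms unfolding has_root_pow_def by force
    ultimately have "has_root_pow G p g (Max ?S) \<and> (\<forall>m. has_root_pow G p g m \<longrightarrow> m \<le> Max ?S)"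
      using Max_in Max_ge by blast
    then show False
      using height unfolding infinite_height_def by blast
  qed
next
  assume "\<forall>n. has_root_pow G p g n"
  then show "infinite_height G p g"
    unfolding infinite_height_def by (metis Suc_n_not_le_n)
qed

lemma (in group) mem_G0_iff:
  "g \<in> G0 G p \<longleftrightarrow> g \<in> carrier G \<and> (\<forall>n. has_root_pow G p g n)"
  unfolding G0_def using infinite_height_iff by blast

lemma (in group) one_mem_G0: "\<one> \<in> G0 G p"
  unfolding mem_G0_iff has_root_pow_def by force

lemma (in group) nat_pow_mem_G0:
  assumes "g \<in> G0 G p"
  shows "g [^] (k::nat) \<in> G0 G p"
proof -
  have "has_root_pow G p (g [^] k) n" for n
  proof -
    obtain h where h: "h \<in> carrier G" "g = h [^] (p ^ n)"
      using assms unfolding mem_G0_iff has_root_pow_def by blast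
    then have "g [^] k = (h [^] k) [^] (p ^ n)"
      by (simp add: nat_pow_pow mult.commute)
    then show ?thesis unfolding has_root_pow_def using h by blast
  qed
  then show ?thesis
    using assms unfolding mem_G0_iff by blast
qed

lemma (in group) nat_pow_mem_FactGroup_pow:
  assumes "\<one> \<in> H" "h \<in> carrier G"
  shows "h [^] (k::nat) \<in> (H #> h) [^]\<^bsub>G Mod H\<^esub> k"
proof (induction k)
  case 0
  then show ?case using assms by (simp add: FactGroup_def)
next
  case (Suc k)
  have "h \<in> H #> h"
    using assms unfolding r_coset_def by force
  then have "h [^] k \<otimes> h \<in> ((H #> h) [^]\<^bsub>G Mod H\<^esub> k) <#> (H #> h)"
    using Suc unfolding set_mult_def by blast
  then show ?case by (simp add: FactGroup_def)
qed

lemma (in group) bounded_period_FactGroup_nat_pow: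
  assumes "bounded_period (G Mod H)" "\<one> \<in> H"
  obtains k :: nat where "k \<ge> 1" "\<And>h. h \<in> carrier G \<Longrightarrow> h [^] k \<in> H"
proof -
  obtain k :: nat where k: "k \<ge> 1" "\<forall>C\<in>carrier (G Mod H). C [^]\<^bsub>G Mod H\<^esub> k = \<one>\<^bsub>G Mod H\<^esub>"
    using assms(1) unfolding bounded_period_def by blast
  have "h [^] k \<in> H" if "h \<in> carrier G" for h
  proof -
    have "H #> h \<in> carrier (G Mod H)"
      using that unfolding FactGroup_def RCOSETS_def by auto
    moreover have "\<one>\<^bsub>G Mod H\<^esub> = H"
      by (simp add: FactGroup_def)
    ultimately show ?thesis
      using k(2) nat_pow_mem_FactGroup_pow[OF assms(2) that, of k] by simp
  qed
  then show thesis using that k(1) by blast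
qed

lemma (in group) exists_nat_pow_root_in_G0:
  fixes k n :: nat
  assumes "Factorial_Ring.prime p" "p_group G p"
    and k: "k \<ge> 1" "\<And>h. h \<in> carrier G \<Longrightarrow> h [^] k \<in> G0 G p"
    and x: "x \<in> G0 G p" and "n \<ge> 1"
  shows "\<exists>y\<in>G0 G p. y [^] n = x"
proof -
  have "k * n \<noteq> 0" "\<not> is_unit p"
    using assms(1,6) k(1) not_prime_unit by auto
  then obtain f m where km: "k * n = p ^ f * m" and "\<not> p dvd m"
    using multiplicity_decompose' by blast
  then have "coprime m p"
    using prime_imp_coprime[OF assms(1)] by (simp add: coprime_commute)
  obtain h where h: "h \<in> carrier G" "x = h [^] (p ^ f)"
    using x unfolding mem_G0_iff has_root_pow_def by blast
  obtain a where "h [^] (p ^ a) = \<one>"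
    using assms(2) h(1) unfolding p_group_def by blast
  moreover have "coprime m (p ^ a)"
    using \<open>coprime m p\<close> by simp
  ultimately obtain m' where m': "h [^] (m * m') = h"
    using h(1) nat_pow_coprime_exponent_inverse by blast
  define y where "y = (h [^] k) [^] m'"
  have "y \<in> G0 G p"
    unfolding y_def using k(2) h(1) nat_pow_mem_G0 by blast
  have "k * m' * n = (k * n) * m'"
    by (simp add: ac_simps)
  also have "\<dots> = m * m' * p ^ f"
    unfolding km by (simp add: ac_simps)
  finally have exponents: "k * m' * n = m * m' * p ^ f" .
  have "y [^] n = h [^] (k * m' * n)"
    unfolding y_def using h(1) by (simp add: nat_pow_pow)
  also have "\<dots> = (h [^] (m * m')) [^] (p ^ f)"
    unfolding exponents using h(1) by (simp add: nat_pow_pow)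
  also have "\<dots> = x"
    using m' h(2) by simp
  finally show ?thesis
    using \<open>y \<in> G0 G p\<close> by blast
qed

theorem lemma2:
  fixes G :: "('a, 'b) monoid_scheme" and p :: nat
  assumes "Factorial_Ring.prime p"
    and "nilpotent_group G"
    and "p_group G p"
    and "bounded_period (G Mod (G0 G p))"
  shows "divisible_group (G\<lparr>carrier := G0 G p\<rparr>)"
proof -
  interpret group G
    using assms(2) unfolding nilpotent_group_def by blast
  obtain k :: nat where "k \<ge> 1" "\<And>h. h \<in> carrier G \<Longrightarrow> h [^]\<^bsub>G\<^esub> k \<in> G0 G p"
    using bounded_period_FactGroup_nat_pow[OF assms(4) one_mem_G0] by blast
  then have "\<exists>y\<in>G0 G p. y [^]\<^bsub>G\<^esub> n = x" if "x \<in> G0 G p" "n \<ge> 1" for x and n :: nat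
    using exists_nat_pow_root_in_G0[OF assms(1,3)] that by blast
  then show ?thesis
    unfolding divisible_group_def by (simp add: nat_pow_consistent[symmetric])
qed

end
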